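(* Let $\mu$ be a partition of $k$. Then, as functions on Young diagrams, $\mathrm{Ko}^{(\alpha)}_\mu=\sum_{\nu\vdash k}\frac{L_{\nu,\mu}}{z_\nu}\,\mathrm{Ch}^{(\alpha)}_\nu .$ In particular $\mathrm{Ko}^{(\alpha)}_\mu$ is an $\alpha$-shifted symmetric function.
   Context: $J^{(\alpha)}_\lambda$ is the Jack symmetric function in Macdonald's $J$-normalization. Write $J^{(\alpha)}_\lambda=\sum_{\tau\vdash|\lambda|}\widehat K^{\lambda,(\alpha)}_\tau M_\tau$ (monomial basis) and $J^{(\alpha)}_\lambda=\sum_{\tau\vdash|\lambda|}\theta^{(\alpha)}_\tau(\lambda)\,\mathrm p_\tau$ (power-sum basis). The numbers $L_{\nu,\mu}$ are defined by $\mathrm p_\nu=\sum_{\mu\vdash k}L_{\nu,\mu}M_\mu$ for $\nu\vdash k$. For a partition $\mu$ with $m_i=m_i(\mu)$ parts equal to $i$, $z_\mu=\prod_i i^{m_i}m_i!$. For $\mu\vdash k$ and $|\lambda|=n$ ($\mu1^{n-k}$ is $\mu$ with $n-k$ parts $1$ appended): $\mathrm{Ko}^{(\alpha)}_\mu(\lambda)=\widehat K^{\lambda,(\alpha)}_{\mu1^{n-k}}/(n-k)!$ if $n\ge k$, $0$ otherwise; $\mathrm{Ch}^{(\alpha)}_\mu(\lambda)=\binom{n-k+m_1(\mu)}{m_1(\mu)}\,z_\mu\,\theta^{(\alpha)}_{\mu1^{n-k}}(\lambda)$ if $n\ge k$, $0$ otherwise. An $\alpha$-shifted symmetric function is a sequence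 $F=(F_N)_{N\ge1}$, $F_N\in\mathbb Q(\alpha)[x_1,\dots,x_N]$ symmetric in $x_1-1/\alpha,\dots,x_N-N/\alpha$, with $F_{N+1}(x_1,\dots,x_N,0)=F_N(x_1,\dots,x_N)$ and bounded degrees; it is viewed as a function on Young diagrams via $F(\lambda)=F_\ell(\lambda_1,\dots,\lambda_\ell)$ for $\lambda$ with $\ell$ rows. It is known that each $\mathrm{Ch}^{(\alpha)}_\nu$ is $\alpha$-shifted symmetric. *)

theory Defs
  imports Main "HOL-Library.FuncSet" "HOL-Library.Poly_Mapping"
    "HOL-Computational_Algebra.Polynomial" "HOL-Computational_Algebra.Fraction_Field"
    "HOL-Combinatorics.Permutations"
begin

type_synonym qa = "rat poly fract"

definition alpha :: qa where
  "alpha = Fract [:0, 1:] 1"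

definition is_partition :: "nat list \<Rightarrow> bool" where
  "is_partition la \<longleftrightarrow> sorted_wrt (\<ge>) la \<and> (\<forall>x\<in>set la. 0 < x)"

definition partitions :: "nat \<Rightarrow> nat list set" where
  "partitions k = {la. is_partition la \<and> sum_list la = k}"

definition mult :: "nat list \<Rightarrow> nat \<Rightarrow> nat" where
  "mult la i = count_list la i"

definition zee :: "nat list \<Rightarrow> nat" where
  "zee la = (\<Prod>i\<in>set la. i ^ mult la i * fact (mult la i))"

definition pad_ones :: "nat list \<Rightarrow> nat \<Rightarrow> nat list" where
  "pad_ones mu r = mu @ replicate r 1"

definition dominated :: "nat list \<Rightarrow> nat list \<Rightarrow> bool" where
  "dominated mu la \<longleftrightarrow> sum_list mu = sum_list la \<and>
     (\<forall>i. sum_list (take i mu) \<le> sum_list (take i la))"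

text \<open>L nu mu: the coefficient of the monomial x_1^{mu_1} ... x_l^{mu_l} in
  p_nu = prod_i (sum_j x_j^{nu_i}), i.e. the number of maps f from the parts of nu
  to the rows of mu such that the parts sent to row j sum up to mu_j.  Since p_nu is
  symmetric, this is the coefficient of M_mu in p_nu.\<close>
definition Lcoef :: "nat list \<Rightarrow> nat list \<Rightarrow> nat" where
  "Lcoef nu mu = card {f \<in> {..<length nu} \<rightarrow>\<^sub>E {..<length mu}.
      \<forall>j<length mu. (\<Sum>i\<in>{i. i < length nu \<and> f i = j}. nu ! i) = mu ! j}"

text \<open>A homogeneous symmetric function of degree n is represented by its coefficient
  vector in the monomial basis (M_tau)_{tau |- n}.  Its coordinates in the power-sum
  basis (p_tau)_{tau |- n}:\<close>
definition pcoord :: "nat \<Rightarrow> (nat list \<Rightarrow> qa) \<Rightarrow> nat list \<Rightarrow> qa" where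
  "pcoord n f = (THE a. (\<forall>tau. a tau \<noteq> 0 \<longrightarrow> tau \<in> partitions n) \<and>
     (\<forall>sg\<in>partitions n. f sg = (\<Sum>tau\<in>partitions n. a tau * of_nat (Lcoef tau sg))))"

definition jinner :: "nat \<Rightarrow> (nat list \<Rightarrow> qa) \<Rightarrow> (nat list \<Rightarrow> qa) \<Rightarrow> qa" where
  "jinner n f g = (\<Sum>tau\<in>partitions n.
      pcoord n f tau * pcoord n g tau * of_nat (zee tau) * alpha ^ length tau)"

text \<open>P_la: monomial coefficients, unitriangular w.r.t. dominance, pairwise orthogonal
  for the alpha inner product.\<close>
definition JackP :: "nat list \<Rightarrow> nat list \<Rightarrow> qa" where
  "JackP = (THE F.
     (\<forall>la mu. F la mu \<noteq> 0 \<longrightarrow> is_partition la \<and> is_partition mu \<and> dominated mu la) \<and>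
     (\<forall>la. is_partition la \<longrightarrow> F la la = 1) \<and>
     (\<forall>la mu. is_partition la \<longrightarrow> is_partition mu \<longrightarrow> sum_list la = sum_list mu \<longrightarrow>
        la \<noteq> mu \<longrightarrow> jinner (sum_list la) (F la) (F mu) = 0))"

text \<open>conjugate partition part la'_j (0-based j)\<close>
definition conj_part :: "nat list \<Rightarrow> nat \<Rightarrow> nat" where
  "conj_part la j = card {i. i < length la \<and> j < la ! i}"

definition cells :: "nat list \<Rightarrow> (nat \<times> nat) set" where
  "cells la = {(i, j). i < length la \<and> j < la ! i}"

definition hookc :: "nat list \<Rightarrow> qa" where
  "hookc la = (\<Prod>(i, j)\<in>cells la.
      alpha * of_nat (la ! i - j - 1) + of_nat (conj_part la j - i - 1) + 1)"

text \<open>J_la = c_la(alpha) P_la; its monomial coefficients Khat^{la}_tau:\<close>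
definition Khat :: "nat list \<Rightarrow> nat list \<Rightarrow> qa" where
  "Khat la tau = hookc la * JackP la tau"

definition theta :: "nat list \<Rightarrow> nat list \<Rightarrow> qa" where
  "theta tau la = pcoord (sum_list la) (Khat la) tau"

definition Ko :: "nat list \<Rightarrow> nat list \<Rightarrow> qa" where
  "Ko mu la = (let n = sum_list la; k = sum_list mu in
     if k \<le> n then Khat la (pad_ones mu (n - k)) / of_nat (fact (n - k)) else 0)"

definition Ch :: "nat list \<Rightarrow> nat list \<Rightarrow> qa" where
  "Ch mu la = (let n = sum_list la; k = sum_list mu in
     if k \<le> n then of_nat ((n - k + mult mu 1) choose (mult mu 1)) * of_nat (zee mu)
        * theta (pad_ones mu (n - k)) la else 0)"

text \<open>Multivariate polynomials over Q(alpha): finitely supported maps from exponent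
  vectors (variable x_i has index i, i >= 1) to coefficients.\<close>
type_synonym mpoly = "(nat \<Rightarrow>\<^sub>0 nat) \<Rightarrow>\<^sub>0 qa"

definition meval :: "mpoly \<Rightarrow> (nat \<Rightarrow> qa) \<Rightarrow> qa" where
  "meval p x = (\<Sum>m\<in>Poly_Mapping.keys p. Poly_Mapping.lookup p m *
     (\<Prod>i\<in>Poly_Mapping.keys (m :: nat \<Rightarrow>\<^sub>0 nat). x i ^ Poly_Mapping.lookup m i))"

definition mvars :: "mpoly \<Rightarrow> nat set" where
  "mvars p = (\<Union>m\<in>Poly_Mapping.keys p. Poly_Mapping.keys (m :: nat \<Rightarrow>\<^sub>0 nat))"

definition mtotdeg :: "mpoly \<Rightarrow> nat" where
  "mtotdeg p = Max (insert 0 ((\<lambda>m :: nat \<Rightarrow>\<^sub>0 nat. sum (Poly_Mapping.lookup m) (Poly_Mapping.keys m)) ` Poly_Mapping.keys p))"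

text \<open>F_N is symmetric in x_1 - 1/alpha, ..., x_N - N/alpha.  Since Q(alpha) is
  infinite, identities of polynomials are stated via polynomial functions.\<close>
definition shifted_sym_poly :: "nat \<Rightarrow> mpoly \<Rightarrow> bool" where
  "shifted_sym_poly N p \<longleftrightarrow>
     (\<forall>s y. s permutes {1..N} \<longrightarrow>
        meval p (\<lambda>i. y i + of_nat i / alpha) =
        meval p (\<lambda>i. y (s i) + of_nat i / alpha))"

definition alpha_shifted_symmetric :: "(nat \<Rightarrow> mpoly) \<Rightarrow> bool" where
  "alpha_shifted_symmetric F \<longleftrightarrow>
     (\<forall>N\<ge>1. mvars (F N) \<subseteq> {1..N} \<and> shifted_sym_poly N (F N)) \<and>
     (\<forall>N\<ge>1. \<forall>x. meval (F (Suc N)) (x(Suc N := 0)) = meval (F N) x) \<and>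
     (\<exists>d. \<forall>N\<ge>1. mtotdeg (F N) \<le> d)"

text \<open>Value on a Young diagram la with l rows: F_l(la_1, ..., la_l); for the empty
  diagram we use F_1(0) (= F_l for any l, by stability).\<close>
definition eval_diagram :: "(nat \<Rightarrow> mpoly) \<Rightarrow> nat list \<Rightarrow> qa" where
  "eval_diagram F la = meval (F (max 1 (length la)))
     (\<lambda>i. if 1 \<le> i \<and> i \<le> length la then of_nat (la ! (i - 1)) else 0)"

definition is_alpha_shifted_symmetric_fn :: "(nat list \<Rightarrow> qa) \<Rightarrow> bool" where
  "is_alpha_shifted_symmetric_fn g \<longleftrightarrow>
     (\<exists>F. alpha_shifted_symmetric F \<and> (\<forall>la. is_partition la \<longrightarrow> g la = eval_diagram F la))"

end

theory Submission
  imports Defs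
begin

text \<open>
  The numbers Ko and Ch are coefficients of the same Jack function J_la read in two bases:
  Ko mu la is the coefficient of M_{mu 1^r}, Ch nu la is (up to normalisation) the coefficient
  of p_{nu 1^r}, and p_tau = sum_sg L_{tau,sg} M_sg links the two.  In an assignment of the parts of
  tau to the rows of mu 1^r, each of the r unit rows receives exactly one part equal to 1, so
  L_{tau, mu 1^r} vanishes unless tau = nu 1^r, and L_{nu 1^r, mu 1^r} = r! binom(m_1(nu) + r, r) L_{nu,mu}.
  After division by r! this is the claimed identity, and since the alpha-shifted symmetric
  functions form a vector space, Ko mu is one as well.  The power-sum coordinates used here are
  well defined because (L_{tau,sg}) is unitriangular when partitions are ordered by length.
\<close>

lemma length_le_sum_list_pos: "\<forall>x\<in>set xs. 0 < x \<Longrightarrow> length xs \<le> sum_list (xs :: nat list)"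
  by (induction xs) auto

lemma count_list_replicate: "count_list (replicate r x) y = (if x = y then r else 0)"
  by (induction r) auto

lemma count_list_eq_card: "count_list xs x = card {i. i < length xs \<and> xs ! i = x}"
proof -
  have "count_list xs x = length (filter (\<lambda>y. y = x) xs)" by (induction xs) auto
  then show ?thesis by (simp add: length_filter_conv_card)
qed

lemma prod_lessThan_diff_eq_fact_binomial: "(\<Prod>i<r. m + r - i) = fact r * ((m + r) choose r)"
proof (induction r)
  case (Suc r)
  have "(\<Prod>i<Suc r. m + Suc r - i) = (m + Suc r) * (\<Prod>i<r. m + r - i)"
    unfolding prod.lessThan_Suc_shift by simp
  also have "\<dots> = fact r * (Suc (m + r) * ((m + r) choose r))"
    using Suc.IH by (simp add: algebra_simps)
  also have "\<dots> = fact (Suc r) * ((m + Suc r) choose Suc r)"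
    by (subst Suc_times_binomial[symmetric]) (simp add: algebra_simps)
  finally show ?case .
qed simp

lemma finite_partitions: "finite (partitions n)"
proof (rule finite_subset)
  show "partitions n \<subseteq> {xs. set xs \<subseteq> {..n} \<and> length xs \<le> n}"
    using length_le_sum_list_pos member_le_sum_list
    unfolding partitions_def is_partition_def by fastforce
  show "finite {xs. set xs \<subseteq> {..n} \<and> length xs \<le> n}"
    by (rule finite_lists_length_le) auto
qed

lemma is_partition_snoc:
  "is_partition (xs @ [x]) \<longleftrightarrow> is_partition xs \<and> 0 < x \<and> (\<forall>y\<in>set xs. x \<le> y)"
  unfolding is_partition_def by (auto simp: sorted_wrt_append)

lemma is_partition_pad_ones: "is_partition nu \<Longrightarrow> is_partition (pad_ones nu r)"
proof (induction r)
  case (Suc r)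
  moreover have "pad_ones nu (Suc r) = pad_ones nu r @ [1]"
    by (simp add: pad_ones_def replicate_append_same)
  moreover have "\<forall>y\<in>set (pad_ones nu r). 1 \<le> y"
    using Suc.IH[OF Suc.prems] unfolding is_partition_def by (simp add: Suc_le_eq)
  ultimately show ?case by (simp add: is_partition_snoc)
qed (simp add: pad_ones_def)

lemma partition_eq_snoc_one:
  assumes "is_partition tau" "1 \<in> set tau"
  shows "tau = butlast tau @ [1]"
proof -
  obtain xs x where tau: "tau = xs @ [x]"
    using assms(2) by (cases tau rule: rev_cases) auto
  with assms have "x = 1" by (auto simp: is_partition_snoc)
  with tau show ?thesis by simp
qed

lemma partition_eq_pad_ones:
  assumes "is_partition tau" "r \<le> count_list tau 1"
  shows "tau = pad_ones (take (length tau - r) tau) r"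
  using assms
proof (induction r arbitrary: tau)
  case 0
  then show ?case by (simp add: pad_ones_def)
next
  case (Suc r)
  define xs where "xs = butlast tau"
  have "1 \<in> set tau" using Suc.prems(2) by (metis count_list_0_iff not_less_eq_eq zero_le)
  then have tau: "tau = xs @ [1]" unfolding xs_def using partition_eq_snoc_one Suc.prems(1) by blast
  then have "is_partition xs" "r \<le> count_list xs 1"
    using Suc.prems by (auto simp: is_partition_snoc)
  then have "xs @ [1] = pad_ones (take (length xs - r) xs) r @ [1]"
    using Suc.IH by simp
  also have "\<dots> = pad_ones (take (length (xs @ [1]) - Suc r) (xs @ [1])) (Suc r)"
    by (simp add: pad_ones_def replicate_append_same)
  finally show ?case unfolding tau .
qed

lemma partitions_pad_ones:
  assumes "r \<le> n"
  shows "{tau \<in> partitions n. r \<le> count_list tau 1} = (\<lambda>nu. pad_ones nu r) ` partitions (n - r)"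
proof (intro equalityI subsetI)
  fix tau assume tau: "tau \<in> {tau \<in> partitions n. r \<le> count_list tau 1}"
  define nu where "nu = take (length tau - r) tau"
  have tau_eq: "tau = pad_ones nu r"
    using tau partition_eq_pad_ones unfolding partitions_def nu_def by blast
  have "sum_list tau = sum_list nu + r"
    by (subst tau_eq) (simp add: pad_ones_def sum_list_replicate)
  moreover have "is_partition nu"
    using tau unfolding partitions_def nu_def is_partition_def
    by (auto dest: in_set_takeD)
  ultimately have "nu \<in> partitions (n - r)"
    using tau unfolding partitions_def by auto
  with tau_eq show "tau \<in> (\<lambda>nu. pad_ones nu r) ` partitions (n - r)" by blast
next
  fix tau assume "tau \<in> (\<lambda>nu. pad_ones nu r) ` partitions (n - r)"
  then show "tau \<in> {tau \<in> partitions n. r \<le> count_list tau 1}"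
    using assms is_partition_pad_ones
    by (auto simp: partitions_def pad_ones_def sum_list_replicate count_list_replicate)
qed

lemma partition_eq_if_mset_eq:
  assumes "is_partition xs" "is_partition ys" "mset xs = mset ys"
  shows "xs = ys"
proof -
  have "sorted (rev xs)" "sorted (rev ys)"
    using assms(1,2) unfolding is_partition_def by (simp_all add: sorted_wrt_rev)
  then have "rev xs = rev ys"
    using assms(3) by (metis mset_rev properties_for_sort)
  then show ?thesis by simp
qed

section \<open>Assignments of parts to rows\<close>

definition row_assignments :: "nat list \<Rightarrow> nat list \<Rightarrow> (nat \<Rightarrow> nat) set" where
  "row_assignments nu mu = {f \<in> {..<length nu} \<rightarrow>\<^sub>E {..<length mu}.
      \<forall>j<length mu. (\<Sum>i\<in>{i. i < length nu \<and> f i = j}. nu ! i) = mu ! j}"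

lemma Lcoef_eq_card: "Lcoef nu mu = card (row_assignments nu mu)"
  unfolding Lcoef_def row_assignments_def ..

lemma finite_row_assignments: "finite (row_assignments nu mu)"
  by (rule finite_subset[of _ "{..<length nu} \<rightarrow>\<^sub>E {..<length mu}"])
     (auto simp: row_assignments_def intro: finite_PiE)

lemma row_assignments_onto:
  assumes "f \<in> row_assignments nu mu" "\<forall>x\<in>set mu. 0 < x"
  shows "f ` {..<length nu} = {..<length mu}"
proof (intro equalityI subsetI)
  fix j assume "j \<in> {..<length mu}"
  with assms have "(\<Sum>i\<in>{i. i < length nu \<and> f i = j}. nu ! i) \<noteq> 0"
    unfolding row_assignments_def by auto
  then have "{i. i < length nu \<and> f i = j} \<noteq> {}" by (metis sum.empty)
  then show "j \<in> f ` {..<length nu}" by auto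
qed (use assms(1) in \<open>auto simp: row_assignments_def\<close>)

lemma Lcoef_nonzero_length_le:
  assumes "Lcoef nu mu \<noteq> 0" "is_partition mu"
  shows "length mu \<le> length nu"
proof -
  obtain f where "f \<in> row_assignments nu mu"
    using assms(1) unfolding Lcoef_eq_card by fastforce
  then have "card {..<length mu} = card (f ` {..<length nu})"
    using row_assignments_onto assms(2) unfolding is_partition_def by simp
  also have "\<dots> \<le> card {..<length nu}" by (rule card_image_le) simp
  finally show ?thesis by simp
qed

lemma Lcoef_nonzero_same_length:
  assumes "Lcoef nu mu \<noteq> 0" "is_partition nu" "is_partition mu" "length nu = length mu"
  shows "nu = mu"
proof -
  define I where "I = {..<length mu}"
  obtain f where f: "f \<in> row_assignments nu mu"
    using assms(1) unfolding Lcoef_eq_card by fastforce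
  have onto: "f ` I = I"
    using row_assignments_onto[OF f] assms(3,4) unfolding is_partition_def I_def by simp
  then have inj: "inj_on f I"
    unfolding I_def by (intro eq_card_imp_inj_on) auto
  have "nu ! i = mu ! f i" if i: "i \<in> I" for i
  proof -
    have fibre: "{i'. i' < length nu \<and> f i' = f i} = {i}"
      using inj i assms(4) onto unfolding I_def inj_on_def by auto
    have "f i < length mu" using i onto unfolding I_def by auto
    then have "(\<Sum>i'\<in>{i'. i' < length nu \<and> f i' = f i}. nu ! i') = mu ! f i"
      using f unfolding row_assignments_def by blast
    then show ?thesis unfolding fibre by simp
  qed
  then have "image_mset (nth nu) (mset_set I) = image_mset (nth mu) (image_mset f (mset_set I))"
    unfolding I_def image_mset.compositionality by (intro image_mset_cong) auto
  also have "\<dots> = image_mset (nth mu) (mset_set I)"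
    using image_mset_mset_set[OF inj] onto by simp
  finally have "mset nu = mset mu"
    using assms(4) unfolding I_def by (metis map_nth mset_map mset_set_upto_eq_mset_upto)
  then show ?thesis using assms(2,3) partition_eq_if_mset_eq by blast
qed

lemma Lcoef_self_nonzero: "Lcoef mu mu \<noteq> 0"
proof -
  have "restrict id {..<length mu} \<in> row_assignments mu mu"
  proof -
    have "{i. i < length mu \<and> restrict id {..<length mu} i = j} = {j}" if "j < length mu" for j
      using that by auto
    then show ?thesis unfolding row_assignments_def by auto
  qed
  then show ?thesis
    unfolding Lcoef_eq_card by (metis card_0_eq empty_iff finite_row_assignments)
qed

lemma row_assignments_comp_permutes:
  assumes s: "s permutes {..<length nu}" and nu_s: "\<And>i. i < length nu \<Longrightarrow> nu ! s i = nu ! i"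
    and f: "f \<in> row_assignments nu mu"
  shows "f \<circ> s \<in> row_assignments nu mu"
proof -
  have s_range: "s i < length nu \<longleftrightarrow> i < length nu" "inv s i < length nu \<longleftrightarrow> i < length nu" for i
    using permutes_in_image[OF s] permutes_in_image[OF permutes_inv[OF s]] by simp_all
  then have "f \<circ> s \<in> {..<length nu} \<rightarrow>\<^sub>E {..<length mu}"
    using f permutes_not_in[OF s] unfolding row_assignments_def by (auto simp: PiE_iff extensional_def)
  moreover have "(\<Sum>i\<in>{i. i < length nu \<and> f (s i) = j}. nu ! i) = (\<Sum>i\<in>{i. i < length nu \<and> f i = j}. nu ! i)"
    for j
    by (rule sum.reindex_bij_witness[where i="inv s" and j=s])
       (use s nu_s s_range in \<open>auto simp: permutes_inverses\<close>)
  ultimately show ?thesis using f unfolding row_assignments_def by simp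
qed

lemma card_row_assignments_swap:
  assumes "a < length nu" "b < length nu" "nu ! a = nu ! b"
  shows "card {f \<in> row_assignments nu mu. f a = j} = card {f \<in> row_assignments nu mu. f b = j}"
proof -
  let ?t = "transpose a b"
  have t: "?t permutes {..<length nu}" by (rule permutes_swap_id) (use assms in auto)
  have "\<And>i. nu ! ?t i = nu ! i" using assms(3) by (simp add: transpose_def)
  then have "bij_betw (\<lambda>f. f \<circ> ?t) {f \<in> row_assignments nu mu. f a = j} {f \<in> row_assignments nu mu. f b = j}"
    by (intro bij_betw_byWitness[where f'="\<lambda>f. f \<circ> ?t"])
       (auto simp: row_assignments_comp_permutes[OF t] comp_assoc)
  then show ?thesis by (rule bij_betw_same_card)
qed

lemma row_assignment_fibre_singleton:
  assumes f: "f \<in> row_assignments nu mu" and pos: "\<forall>y\<in>set nu. 0 < y"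
    and i: "i < length nu" "f i = j" and same: "nu ! i = mu ! j"
  shows "{i'. i' < length nu \<and> f i' = j} = {i}"
proof -
  define F where "F = {i'. i' < length nu \<and> f i' = j}"
  have "j < length mu" using f i unfolding row_assignments_def by auto
  then have "sum (nth nu) F = nu ! i" using f same unfolding row_assignments_def F_def by simp
  moreover have "sum (nth nu) F = nu ! i + sum (nth nu) (F - {i})"
    by (rule sum.remove) (use i in \<open>auto simp: F_def\<close>)
  ultimately have "\<forall>i'\<in>F - {i}. nu ! i' = 0" by (simp add: F_def)
  moreover have "nu ! i' \<noteq> 0" if "i' \<in> F" for i'
    using pos that nth_mem unfolding F_def by fastforce
  ultimately have "F - {i} = {}" by blast
  then show ?thesis using i unfolding F_def by auto
qed

lemma row_assignment_unit_row:
  assumes f: "f \<in> row_assignments nu mu" and pos: "\<forall>y\<in>set nu. 0 < y"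
    and j: "j < length mu" "mu ! j = 1"
  obtains i where "i < length nu" "nu ! i = 1" "{i'. i' < length nu \<and> f i' = j} = {i}"
proof -
  define F where "F = {i'. i' < length nu \<and> f i' = j}"
  have sum: "(\<Sum>i'\<in>F. nu ! i') = 1" using f j unfolding row_assignments_def F_def by auto
  then obtain i where i: "i \<in> F" by (metis sum.empty zero_neq_one ex_in_conv)
  have "nu ! i \<le> 1" using member_le_sum[OF i, of "nth nu"] sum unfolding F_def by simp
  moreover have "0 < nu ! i" using pos i unfolding F_def by simp
  ultimately have "nu ! i = 1" by simp
  moreover from this have "F = {i}"
    using row_assignment_fibre_singleton[OF f pos] i j unfolding F_def by simp
  ultimately show ?thesis using that i unfolding F_def by blast
qed

lemma sum_nth_append_prefix:
  "(\<Sum>i\<in>{i. i < length xs \<and> P i}. (xs @ ys) ! i) = (\<Sum>i\<in>{i. i < length xs \<and> P i}. xs ! i)"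
  by (rule sum.cong) (auto simp: nth_append)

lemma row_assignments_snoc_extend:
  assumes g: "g \<in> row_assignments nu mu"
  shows "g(length nu := length mu) \<in> row_assignments (nu @ [x]) (mu @ [x])"
proof -
  define p where "p = length nu"
  define q where "q = length mu"
  have g_lt: "g i < q" if "i < p" for i using g that unfolding row_assignments_def p_def q_def by auto
  have "(\<Sum>i\<in>{i. i < Suc p \<and> (g(p := q)) i = j}. (nu @ [x]) ! i) = (mu @ [x]) ! j"
    if j: "j < Suc q" for j
  proof (cases "j = q")
    case True
    then have "{i. i < Suc p \<and> (g(p := q)) i = j} = {p}" using g_lt less_Suc_eq by fastforce
    then show ?thesis using True by (simp add: p_def q_def)
  next
    case False
    with j have "j < q" by simp
    have "{i. i < Suc p \<and> (g(p := q)) i = j} = {i. i < p \<and> g i = j}"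
      using False less_Suc_eq by auto
    then have "(\<Sum>i\<in>{i. i < Suc p \<and> (g(p := q)) i = j}. (nu @ [x]) ! i)
        = (\<Sum>i\<in>{i. i < p \<and> g i = j}. nu ! i)"
      using sum_nth_append_prefix unfolding p_def by simp
    also have "\<dots> = mu ! j" using g \<open>j < q\<close> unfolding row_assignments_def p_def q_def by auto
    finally show ?thesis using \<open>j < q\<close> by (simp add: nth_append q_def)
  qed
  then show ?thesis
    using g g_lt unfolding row_assignments_def p_def q_def
    by (auto simp: PiE_iff extensional_def less_Suc_eq)
qed

lemma row_assignments_snoc_restrict:
  assumes f: "f \<in> row_assignments (nu @ [x]) (mu @ [x])" "f (length nu) = length mu"
    and pos: "\<forall>y\<in>set nu. 0 < y" "0 < x"
  shows "f(length nu := undefined) \<in> row_assignments nu mu"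
proof -
  define p where "p = length nu"
  define q where "q = length mu"
  have last_row: "{i. i < Suc p \<and> f i = q} = {p}"
    using row_assignment_fibre_singleton[OF f(1)] f(2) pos unfolding p_def q_def by simp
  have f_lt: "f i < q" if "i < p" for i
  proof -
    have "f i < Suc q" using f(1) that unfolding row_assignments_def p_def q_def by auto
    moreover have "i \<notin> {i. i < Suc p \<and> f i = q}" unfolding last_row using that by simp
    then have "f i \<noteq> q" using that by simp
    ultimately show ?thesis by simp
  qed
  have "(\<Sum>i\<in>{i. i < p \<and> (f(p := undefined)) i = j}. nu ! i) = mu ! j" if j: "j < q" for j
  proof -
    have "{i. i < p \<and> (f(p := undefined)) i = j} = {i. i < p \<and> f i = j}" by auto
    moreover have "{i. i < Suc p \<and> f i = j} = {i. i < p \<and> f i = j}"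
      using f(2) j less_Suc_eq unfolding p_def q_def by auto
    ultimately have "(\<Sum>i\<in>{i. i < p \<and> (f(p := undefined)) i = j}. nu ! i)
        = (\<Sum>i\<in>{i. i < Suc p \<and> f i = j}. (nu @ [x]) ! i)"
      using sum_nth_append_prefix[where xs=nu and ys="[x]" and P="\<lambda>i. f i = j"] unfolding p_def by simp
    also have "\<dots> = (mu @ [x]) ! j"
      using f(1) j unfolding row_assignments_def p_def q_def by auto
    finally show ?thesis using j by (simp add: nth_append q_def)
  qed
  then show ?thesis
    using f(1) f_lt unfolding row_assignments_def p_def q_def
    by (auto simp: PiE_iff extensional_def)
qed

lemma card_row_assignments_snoc:
  assumes "\<forall>y\<in>set nu. 0 < y" "0 < x"
  shows "card {f \<in> row_assignments (nu @ [x]) (mu @ [x]). f (length nu) = length mu}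
    = card (row_assignments nu mu)"
proof -
  have "bij_betw (\<lambda>g. g(length nu := length mu)) (row_assignments nu mu)
      {f \<in> row_assignments (nu @ [x]) (mu @ [x]). f (length nu) = length mu}"
  proof (rule bij_betw_byWitness[where f'="\<lambda>f. f(length nu := undefined)"])
    show "\<forall>g\<in>row_assignments nu mu. (g(length nu := length mu))(length nu := undefined) = g"
      unfolding row_assignments_def by (auto simp: PiE_iff extensional_def)
  qed (use row_assignments_snoc_extend row_assignments_snoc_restrict assms in auto)
  then show ?thesis by (simp add: bij_betw_same_card)
qed

lemma card_row_assignments_unit_last_row:
  assumes pos: "\<forall>y\<in>set nu. 0 < y"
  shows "card (row_assignments nu (rho @ [1])) = (\<Sum>i\<in>{i. i < length nu \<and> nu ! i = 1}.
    card {f \<in> row_assignments nu (rho @ [1]). f i = length rho})"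
proof -
  define V where "V = row_assignments nu (rho @ [1])"
  define W where "W i = {f \<in> V. f i = length rho}" for i
  define Ones where "Ones = {i. i < length nu \<and> nu ! i = 1}"
  have last_row: "length rho < length (rho @ [1])" "(rho @ [1]) ! length rho = 1" by simp_all
  have V_eq: "V = (\<Union>i\<in>Ones. W i)"
  proof (intro equalityI subsetI)
    fix f assume f: "f \<in> V"
    then obtain i where "i < length nu" "nu ! i = 1" "{i'. i' < length nu \<and> f i' = length rho} = {i}"
      using row_assignment_unit_row[OF _ pos last_row] unfolding V_def by blast
    then show "f \<in> (\<Union>i\<in>Ones. W i)" using f unfolding Ones_def W_def by blast
  qed (auto simp: W_def)
  have disjoint: "W a \<inter> W b = {}" if "a \<in> Ones" "b \<in> Ones" "a \<noteq> b" for a b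
  proof (rule ccontr)
    assume "W a \<inter> W b \<noteq> {}"
    then obtain f where f: "f \<in> V" "f a = length rho" "f b = length rho" unfolding W_def by auto
    obtain i where fibre: "{i'. i' < length nu \<and> f i' = length rho} = {i}"
      using row_assignment_unit_row[OF f(1)[unfolded V_def] pos last_row] by blast
    have "a \<in> {i'. i' < length nu \<and> f i' = length rho}" "b \<in> {i'. i' < length nu \<and> f i' = length rho}"
      using that(1,2) f(2,3) unfolding Ones_def by simp_all
    then show False using that(3) unfolding fibre by simp
  qed
  have "card V = (\<Sum>i\<in>Ones. card (W i))"
    unfolding V_eq using disjoint
    by (intro card_UN_disjoint) (auto simp: Ones_def W_def V_def finite_row_assignments)
  then show ?thesis unfolding V_def W_def Ones_def .
qed

lemma Lcoef_append_one:
  assumes tau: "is_partition tau"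
  shows "Lcoef tau (rho @ [1]) = count_list tau 1 * Lcoef (butlast tau) rho"
proof -
  let ?W = "\<lambda>i. {f \<in> row_assignments tau (rho @ [1]). f i = length rho}"
  let ?Ones = "{i. i < length tau \<and> tau ! i = 1}"
  have pos: "\<forall>y\<in>set tau. 0 < y" using tau unfolding is_partition_def by simp
  show ?thesis
  proof (cases "1 \<in> set tau")
    case False
    then have no_ones: "?Ones = {}" using nth_mem by fastforce
    show ?thesis
      using card_row_assignments_unit_last_row[OF pos, of rho]
      unfolding Lcoef_eq_card count_list_eq_card no_ones by simp
  next
    case True
    define xs where "xs = butlast tau"
    have tau_eq: "tau = xs @ [1]" unfolding xs_def using partition_eq_snoc_one[OF tau True] .
    have "card (?W i) = card (?W (length xs))" if "i \<in> ?Ones" for i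
      using card_row_assignments_swap[of i tau "length xs"] that by (simp add: tau_eq)
    moreover have "card (?W (length xs)) = Lcoef xs rho"
      using card_row_assignments_snoc[of xs 1 rho] pos unfolding Lcoef_eq_card tau_eq by simp
    ultimately show ?thesis
      using card_row_assignments_unit_last_row[OF pos]
      unfolding Lcoef_eq_card count_list_eq_card xs_def by simp
  qed
qed

lemma Lcoef_append_ones:
  assumes "is_partition tau"
  shows "Lcoef tau (mu @ replicate r 1) =
    (\<Prod>i<r. count_list tau 1 - i) * Lcoef (take (length tau - r) tau) mu"
  using assms
proof (induction r arbitrary: tau)
  case (Suc r)
  define c where "c = count_list tau 1"
  have step: "Lcoef tau (mu @ replicate (Suc r) 1) = c * Lcoef (butlast tau) (mu @ replicate r 1)"
    using Lcoef_append_one[OF Suc.prems, of "mu @ replicate r 1"]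
    by (simp add: c_def replicate_append_same)
  show ?case
  proof (cases "c = 0")
    case True
    then show ?thesis using step by (simp add: c_def prod.lessThan_Suc_shift)
  next
    case False
    define xs where "xs = butlast tau"
    have "1 \<in> set tau" using False unfolding c_def by (simp add: count_list_0_iff)
    then have tau_eq: "tau = xs @ [1]" unfolding xs_def by (rule partition_eq_snoc_one[OF Suc.prems])
    then have "is_partition xs" "count_list xs 1 = c - 1"
      using Suc.prems unfolding c_def by (simp_all add: is_partition_snoc)
    then have IH: "Lcoef xs (mu @ replicate r 1) = (\<Prod>i<r. c - 1 - i) * Lcoef (take (length xs - r) xs) mu"
      using Suc.IH by simp
    have "Lcoef tau (mu @ replicate (Suc r) 1) = c * ((\<Prod>i<r. c - 1 - i) * Lcoef (take (length xs - r) xs) mu)"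
      using step IH unfolding xs_def by simp
    also have "\<dots> = (\<Prod>i<Suc r. c - i) * Lcoef (take (length tau - Suc r) tau) mu"
      unfolding prod.lessThan_Suc_shift by (simp add: tau_eq)
    finally show ?thesis unfolding c_def .
  qed
qed simp

lemma Lcoef_pad_ones_eq_0:
  assumes "is_partition tau" "count_list tau 1 < r"
  shows "Lcoef tau (pad_ones mu r) = 0"
proof -
  have "(\<Prod>i<r. count_list tau 1 - i) = 0"
    using assms(2) by (intro prod_zero bexI[of _ "count_list tau 1"]) auto
  then show ?thesis unfolding pad_ones_def Lcoef_append_ones[OF assms(1)] by simp
qed

lemma Lcoef_pad_ones_pad_ones:
  assumes "is_partition nu"
  shows "Lcoef (pad_ones nu r) (pad_ones mu r) = fact r * ((r + mult nu 1) choose mult nu 1) * Lcoef nu mu"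
proof -
  have "count_list (pad_ones nu r) 1 = mult nu 1 + r"
    unfolding pad_ones_def mult_def by (simp add: count_list_replicate)
  then have "Lcoef (pad_ones nu r) (pad_ones mu r) = (\<Prod>i<r. mult nu 1 + r - i) * Lcoef nu mu"
    unfolding pad_ones_def Lcoef_append_ones[OF is_partition_pad_ones[OF assms, unfolded pad_ones_def]]
    by simp
  moreover have "(mult nu 1 + r) choose r = (r + mult nu 1) choose mult nu 1"
    using binomial_symmetric[of r "r + mult nu 1"] by (simp add: add.commute)
  ultimately show ?thesis
    by (simp add: prod_lessThan_diff_eq_fact_binomial)
qed

section \<open>Unitriangular systems and power-sum coordinates\<close>

definition is_coords :: "'a set \<Rightarrow> ('a \<Rightarrow> 'a \<Rightarrow> 'b::comm_ring_1) \<Rightarrow> ('a \<Rightarrow> 'b) \<Rightarrow> ('a \<Rightarrow> 'b) \<Rightarrow> bool" where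
  "is_coords P L a f \<longleftrightarrow> (\<forall>t. a t \<noteq> 0 \<longrightarrow> t \<in> P) \<and> (\<forall>s\<in>P. f s = (\<Sum>t\<in>P. a t * L t s))"

context
  fixes P :: "'a set" and L :: "'a \<Rightarrow> 'a \<Rightarrow> 'b::field" and rk :: "'a \<Rightarrow> nat"
  assumes finite: "finite P"
    and diagonal: "\<And>s. s \<in> P \<Longrightarrow> L s s \<noteq> 0"
    and triangular: "\<And>s t. s \<in> P \<Longrightarrow> t \<in> P \<Longrightarrow> t \<noteq> s \<Longrightarrow> L t s \<noteq> 0 \<Longrightarrow> rk s < rk t"
begin

lemma unitriangular_coords_unique:
  assumes a: "is_coords P L a f" and b: "is_coords P L b f"
  shows "a = b"
proof (rule ccontr)
  define D where "D = {t \<in> P. a t \<noteq> b t}"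
  have finite_D: "finite D" using finite unfolding D_def by simp
  assume "a \<noteq> b"
  then obtain t where "a t \<noteq> b t" by (auto simp: fun_eq_iff)
  moreover have "t \<in> P" if "a t \<noteq> b t" for t
  proof (rule ccontr)
    assume "t \<notin> P"
    then have "a t = 0" "b t = 0" using a b unfolding is_coords_def by auto
    with that show False by simp
  qed
  ultimately have "D \<noteq> {}" unfolding D_def by blast
  then have "Max (rk ` D) \<in> rk ` D" using finite_D by simp
  then obtain s where s: "s \<in> D" "rk s = Max (rk ` D)" by auto
  then have s_max: "rk t \<le> rk s" if "t \<in> D" for t using finite_D that by simp
  have "(\<Sum>t\<in>P. (a t - b t) * L t s) = 0"
    using a b s unfolding is_coords_def D_def by (simp add: left_diff_distrib sum_subtractf)
  moreover have "(\<Sum>t\<in>P - {s}. (a t - b t) * L t s) = 0"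
  proof (rule sum.neutral, rule ballI)
    fix t assume t: "t \<in> P - {s}"
    show "(a t - b t) * L t s = 0"
    proof (cases "a t = b t")
      case False
      with t have "rk t \<le> rk s" using s_max unfolding D_def by simp
      then have "L t s = 0" using triangular[of s t] t s unfolding D_def by force
      then show ?thesis by simp
    qed simp
  qed
  moreover have "(\<Sum>t\<in>P. (a t - b t) * L t s) = (a s - b s) * L s s + (\<Sum>t\<in>P - {s}. (a t - b t) * L t s)"
    using finite s unfolding D_def by (intro sum.remove) simp_all
  ultimately show False using s diagonal unfolding D_def by simp
qed
lemma unitriangular_coords_exist: "\<exists>a. is_coords P L a f"
  using finite
proof (induction rule: finite_remove_induct)
  case empty
  show ?case by (rule exI[of _ "\<lambda>_. 0"]) (simp add: is_coords_def)
next
  case (remove A)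
  have "Min (rk ` A) \<in> rk ` A" using remove.hyps(1,2) by simp
  then obtain s0 where s0: "s0 \<in> A" "rk s0 = Min (rk ` A)" by auto
  then have minimal: "rk s0 \<le> rk s" if "s \<in> A" for s using remove.hyps(1) that by simp
  obtain a' where a': "is_coords (A - {s0}) L a' f" using remove.IH[OF s0(1)] by blast
  define a where "a = a'(s0 := (f s0 - (\<Sum>t\<in>A - {s0}. a' t * L t s0)) / L s0 s0)"
  have split: "(\<Sum>t\<in>A. a t * L t s) = a s0 * L s0 s + (\<Sum>t\<in>A - {s0}. a' t * L t s)" for s
  proof -
    have "(\<Sum>t\<in>A. a t * L t s) = a s0 * L s0 s + (\<Sum>t\<in>A - {s0}. a t * L t s)"
      using remove.hyps(1) s0(1) by (rule sum.remove)
    also have "(\<Sum>t\<in>A - {s0}. a t * L t s) = (\<Sum>t\<in>A - {s0}. a' t * L t s)"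
      unfolding a_def by (rule sum.cong) simp_all
    finally show ?thesis .
  qed
  have "f s = (\<Sum>t\<in>A. a t * L t s)" if s: "s \<in> A" for s
  proof (cases "s = s0")
    case True
    have "L s0 s0 \<noteq> 0" using diagonal s0(1) remove.hyps(3) by blast
    then show ?thesis unfolding split True by (simp add: a_def)
  next
    case False
    have "L s0 s = 0"
    proof (rule ccontr)
      assume "L s0 s \<noteq> 0"
      then have "rk s < rk s0" using triangular[of s s0] s s0(1) False remove.hyps(3) by blast
      with minimal[OF s] show False by simp
    qed
    then show ?thesis unfolding split using a' s False unfolding is_coords_def by simp
  qed
  moreover have "a t \<noteq> 0 \<longrightarrow> t \<in> A" for t
    using a' s0(1) unfolding a_def is_coords_def by auto
  ultimately show ?case unfolding is_coords_def by blast
qed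

end

lemma pcoord_is_coords: "is_coords (partitions n) (\<lambda>t s. of_nat (Lcoef t s)) (pcoord n f) f"
proof -
  have diagonal: "(of_nat (Lcoef s s) :: qa) \<noteq> 0" for s by (simp add: Lcoef_self_nonzero)
  have triangular: "length s < length t"
    if "s \<in> partitions n" "t \<in> partitions n" "t \<noteq> s" "(of_nat (Lcoef t s) :: qa) \<noteq> 0" for s t
  proof -
    have L: "Lcoef t s \<noteq> 0" using that(4) by simp
    moreover have "is_partition s" "is_partition t" using that(1,2) unfolding partitions_def by simp_all
    ultimately have "length s \<le> length t" "length t \<noteq> length s"
      using Lcoef_nonzero_length_le Lcoef_nonzero_same_length that(3) by blast+
    then show ?thesis by simp
  qed
  have unique: "\<exists>!a. is_coords (partitions n) (\<lambda>t s. of_nat (Lcoef t s)) a f"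
    using unitriangular_coords_exist[where L="\<lambda>t s. of_nat (Lcoef t s)" and rk=length,
        OF finite_partitions diagonal triangular]
      unitriangular_coords_unique[where L="\<lambda>t s. of_nat (Lcoef t s)" and rk=length,
        OF finite_partitions diagonal triangular]
    by blast
  have "pcoord n f = (THE a. is_coords (partitions n) (\<lambda>t s. of_nat (Lcoef t s)) a f)"
    unfolding pcoord_def is_coords_def ..
  with theI'[OF unique] show ?thesis by simp
qed

lemma zee_nonzero: "is_partition nu \<Longrightarrow> zee nu \<noteq> 0"
  unfolding zee_def is_partition_def by auto

lemma monomial_coeff_pad_ones:
  fixes f :: "nat list \<Rightarrow> qa"
  assumes mu: "is_partition mu" and n: "sum_list mu + r = n"
  shows "f (pad_ones mu r) = fact r * (\<Sum>nu\<in>partitions (n - r).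
    of_nat (Lcoef nu mu * ((r + mult nu 1) choose mult nu 1)) * pcoord n f (pad_ones nu r))"
proof -
  let ?a = "pcoord n f" and ?pad = "\<lambda>nu. pad_ones nu r"
  let ?term = "\<lambda>tau. ?a tau * of_nat (Lcoef tau (?pad mu))"
  have "?pad mu \<in> partitions n"
    using is_partition_pad_ones[OF mu] n unfolding partitions_def pad_ones_def
    by (simp add: sum_list_replicate)
  then have "f (?pad mu) = (\<Sum>tau\<in>partitions n. ?term tau)"
    using pcoord_is_coords unfolding is_coords_def by blast
  also have "\<dots> = (\<Sum>tau\<in>{tau \<in> partitions n. r \<le> count_list tau 1}. ?term tau)"
  proof (rule sum.mono_neutral_right)
    show "finite (partitions n)" by (rule finite_partitions)
  qed (auto simp: partitions_def not_le Lcoef_pad_ones_eq_0)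
  also have "\<dots> = (\<Sum>nu\<in>partitions (n - r). ?term (?pad nu))"
    unfolding partitions_pad_ones[of r n, OF le_add2[of r "sum_list mu", unfolded n]]
    by (simp add: sum.reindex inj_on_def pad_ones_def)
  also have "\<dots> = (\<Sum>nu\<in>partitions (n - r).
      fact r * (of_nat (Lcoef nu mu * ((r + mult nu 1) choose mult nu 1)) * ?a (?pad nu)))"
    by (rule sum.cong) (auto simp: partitions_def Lcoef_pad_ones_pad_ones)
  finally show ?thesis by (simp add: sum_distrib_left)
qed

lemma Ko_eq_sum_Ch:
  assumes mu: "mu \<in> partitions k"
  shows "Ko mu la = (\<Sum>nu\<in>partitions k. of_nat (Lcoef nu mu) / of_nat (zee nu) * Ch nu la)"
proof (cases "k \<le> sum_list la")
  case False
  then show ?thesis using mu unfolding Ko_def Ch_def partitions_def by simp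
next
  case True
  define r where "r = sum_list la - k"
  have mu': "is_partition mu" "sum_list mu + r = sum_list la"
    using mu True unfolding partitions_def r_def by auto
  have k: "sum_list la - r = k" using True unfolding r_def by simp
  have "Ko mu la = Khat la (pad_ones mu r) / fact r"
    using mu True unfolding Ko_def r_def partitions_def by (simp add: Let_def)
  also have "\<dots> = (\<Sum>nu\<in>partitions k. of_nat (Lcoef nu mu * ((r + mult nu 1) choose mult nu 1))
      * theta (pad_ones nu r) la)"
    unfolding monomial_coeff_pad_ones[OF mu'] theta_def k by simp
  also have "\<dots> = (\<Sum>nu\<in>partitions k. of_nat (Lcoef nu mu) / of_nat (zee nu) * Ch nu la)"
  proof (rule sum.cong)
    fix nu assume "nu \<in> partitions k"
    then have nu: "is_partition nu" "sum_list nu = k" unfolding partitions_def by simp_all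
    then have "Ch nu la = of_nat ((r + mult nu 1) choose mult nu 1) * of_nat (zee nu) * theta (pad_ones nu r) la"
      using True unfolding Ch_def r_def by (simp add: Let_def)
    moreover have "(of_nat (zee nu) :: qa) \<noteq> 0" using zee_nonzero[OF nu(1)] by simp
    ultimately show "of_nat (Lcoef nu mu * ((r + mult nu 1) choose mult nu 1)) * theta (pad_ones nu r) la
        = of_nat (Lcoef nu mu) / of_nat (zee nu) * Ch nu la"
      by (simp add: field_simps)
  qed simp
  finally show ?thesis .
qed

section \<open>Shifted symmetric functions form a vector space\<close>

lemma meval_superset:
  assumes "finite K" "Poly_Mapping.keys p \<subseteq> K"
  shows "meval p x = (\<Sum>m\<in>K. Poly_Mapping.lookup p m *
    (\<Prod>i\<in>Poly_Mapping.keys m. x i ^ Poly_Mapping.lookup m i))"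
  unfolding meval_def
  by (rule sum.mono_neutral_left) (use assms in \<open>auto simp: in_keys_iff\<close>)

lemma meval_add: "meval (p + q) x = meval p x + meval q x"
proof -
  let ?K = "Poly_Mapping.keys p \<union> Poly_Mapping.keys q"
  have "finite ?K" by simp
  moreover have "Poly_Mapping.keys (p + q) \<subseteq> ?K" by (rule keys_add)
  ultimately show ?thesis
    using meval_superset[of ?K p x] meval_superset[of ?K q x] meval_superset[of ?K "p + q" x]
    by (simp add: lookup_add distrib_right sum.distrib)
qed

lemma lookup_map_mult:
  fixes c :: "'b::mult_zero"
  shows "Poly_Mapping.lookup (Poly_Mapping.map ((*) c) p) m = c * Poly_Mapping.lookup p m"
  by (simp add: Poly_Mapping.map.rep_eq when_def)

lemma keys_map_mult_subset:
  fixes c :: "'b::mult_zero"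
  shows "Poly_Mapping.keys (Poly_Mapping.map ((*) c) p) \<subseteq> Poly_Mapping.keys p"
  by (auto simp: in_keys_iff lookup_map_mult)

lemma meval_map_mult: "meval (Poly_Mapping.map ((*) c) p) x = c * meval p x"
  using meval_superset[OF _ keys_map_mult_subset, of p c x]
  by (simp add: meval_def lookup_map_mult sum_distrib_left mult.assoc)

lemma mtotdeg_le_iff:
  "mtotdeg p \<le> d \<longleftrightarrow> (\<forall>m\<in>Poly_Mapping.keys p. sum (Poly_Mapping.lookup m) (Poly_Mapping.keys m) \<le> d)"
  unfolding mtotdeg_def by (subst Max_le_iff) auto

lemma alpha_shifted_symmetric_zero: "alpha_shifted_symmetric (\<lambda>N. 0)"
  unfolding alpha_shifted_symmetric_def shifted_sym_poly_def mvars_def mtotdeg_def meval_def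
  by simp

lemma mvars_subset_if_keys_subset:
  "Poly_Mapping.keys p \<subseteq> Poly_Mapping.keys q \<union> Poly_Mapping.keys r \<Longrightarrow> mvars p \<subseteq> mvars q \<union> mvars r"
  unfolding mvars_def by blast

lemma mtotdeg_le_if_keys_subset:
  "Poly_Mapping.keys p \<subseteq> Poly_Mapping.keys q \<union> Poly_Mapping.keys r \<Longrightarrow>
    mtotdeg q \<le> d \<Longrightarrow> mtotdeg r \<le> d \<Longrightarrow> mtotdeg p \<le> d"
  unfolding mtotdeg_le_iff by blast

lemma shifted_sym_poly_lincomb:
  assumes eval: "\<And>x. meval p x = a * meval q x + b * meval r x"
    and "shifted_sym_poly N q" "shifted_sym_poly N r"
  shows "shifted_sym_poly N p"
  unfolding shifted_sym_poly_def eval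
proof (intro allI impI)
  fix s y assume "s permutes {1..N}"
  with assms(2,3)
  have "meval q (\<lambda>i. y i + of_nat i / alpha) = meval q (\<lambda>i. y (s i) + of_nat i / alpha)"
    "meval r (\<lambda>i. y i + of_nat i / alpha) = meval r (\<lambda>i. y (s i) + of_nat i / alpha)"
    unfolding shifted_sym_poly_def by blast+
  then show "a * meval q (\<lambda>i. y i + of_nat i / alpha) + b * meval r (\<lambda>i. y i + of_nat i / alpha) =
      a * meval q (\<lambda>i. y (s i) + of_nat i / alpha) + b * meval r (\<lambda>i. y (s i) + of_nat i / alpha)"
    by (simp only:)
qed

lemma alpha_shifted_symmetric_lincomb:
  assumes F: "alpha_shifted_symmetric F" and G: "alpha_shifted_symmetric G"
  shows "alpha_shifted_symmetric
    (\<lambda>N. Poly_Mapping.map ((*) a) (F N) + Poly_Mapping.map ((*) b) (G N))"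
    (is "alpha_shifted_symmetric ?H")
proof -
  have keys: "Poly_Mapping.keys (?H N) \<subseteq> Poly_Mapping.keys (F N) \<union> Poly_Mapping.keys (G N)" for N
    using keys_add[of "Poly_Mapping.map ((*) a) (F N)" "Poly_Mapping.map ((*) b) (G N)"]
      keys_map_mult_subset[of a "F N"] keys_map_mult_subset[of b "G N"] by blast
  have eval: "meval (?H N) x = a * meval (F N) x + b * meval (G N) x" for N x
    by (simp add: meval_add meval_map_mult)
  have "\<exists>d. \<forall>N\<ge>1. mtotdeg (F N) \<le> d" "\<exists>d. \<forall>N\<ge>1. mtotdeg (G N) \<le> d"
    using F G unfolding alpha_shifted_symmetric_def by simp_all
  then obtain dF dG where "\<And>N. 1 \<le> N \<Longrightarrow> mtotdeg (F N) \<le> dF" "\<And>N. 1 \<le> N \<Longrightarrow> mtotdeg (G N) \<le> dG"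
    by blast
  then have "mtotdeg (?H N) \<le> max dF dG" if "1 \<le> N" for N
    using mtotdeg_le_if_keys_subset[OF keys] that by (meson max.coboundedI1 max.coboundedI2)
  moreover have "mvars (?H N) \<subseteq> {1..N} \<and> shifted_sym_poly N (?H N)" if "1 \<le> N" for N
    using F G that mvars_subset_if_keys_subset[OF keys, of N] shifted_sym_poly_lincomb[OF eval]
    unfolding alpha_shifted_symmetric_def by blast
  moreover have "meval (?H (Suc N)) (x(Suc N := 0)) = meval (?H N) x" if "1 \<le> N" for N x
  proof -
    have "meval (F (Suc N)) (x(Suc N := 0)) = meval (F N) x"
      "meval (G (Suc N)) (x(Suc N := 0)) = meval (G N) x"
      using F G that unfolding alpha_shifted_symmetric_def by blast+
    then show ?thesis unfolding eval by (simp only:)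
  qed
  ultimately show ?thesis unfolding alpha_shifted_symmetric_def by blast
qed

lemma is_alpha_shifted_symmetric_fn_zero: "is_alpha_shifted_symmetric_fn (\<lambda>_. 0)"
  unfolding is_alpha_shifted_symmetric_fn_def
  using alpha_shifted_symmetric_zero by (auto simp: eval_diagram_def meval_def)

lemma is_alpha_shifted_symmetric_fn_lincomb:
  assumes "is_alpha_shifted_symmetric_fn g" "is_alpha_shifted_symmetric_fn h"
  shows "is_alpha_shifted_symmetric_fn (\<lambda>la. a * g la + b * h la)"
proof -
  obtain F G where "alpha_shifted_symmetric F" "\<And>la. is_partition la \<Longrightarrow> g la = eval_diagram F la"
    "alpha_shifted_symmetric G" "\<And>la. is_partition la \<Longrightarrow> h la = eval_diagram G la"
    using assms unfolding is_alpha_shifted_symmetric_fn_def by blast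
  then show ?thesis
    unfolding is_alpha_shifted_symmetric_fn_def
    by (intro exI[of _ "\<lambda>N. Poly_Mapping.map ((*) a) (F N) + Poly_Mapping.map ((*) b) (G N)"])
       (simp add: alpha_shifted_symmetric_lincomb eval_diagram_def meval_add meval_map_mult)
qed

lemma is_alpha_shifted_symmetric_fn_sum:
  assumes "finite A" "\<And>x. x \<in> A \<Longrightarrow> is_alpha_shifted_symmetric_fn (g x)"
  shows "is_alpha_shifted_symmetric_fn (\<lambda>la. \<Sum>x\<in>A. c x * g x la)"
  using assms
proof (induction A rule: finite_induct)
  case empty
  then show ?case using is_alpha_shifted_symmetric_fn_zero by simp
next
  case (insert x A)
  then have "is_alpha_shifted_symmetric_fn (\<lambda>la. c x * g x la + 1 * (\<Sum>x\<in>A. c x * g x la))"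
    by (intro is_alpha_shifted_symmetric_fn_lincomb) auto
  then show ?case using insert.hyps by simp
qed

lemma is_alpha_shifted_symmetric_fn_cong:
  assumes "is_alpha_shifted_symmetric_fn g" "\<And>la. is_partition la \<Longrightarrow> g la = h la"
  shows "is_alpha_shifted_symmetric_fn h"
proof -
  obtain F where "alpha_shifted_symmetric F" "\<And>la. is_partition la \<Longrightarrow> g la = eval_diagram F la"
    using assms(1) unfolding is_alpha_shifted_symmetric_fn_def by blast
  then show ?thesis unfolding is_alpha_shifted_symmetric_fn_def using assms(2) by auto
qed

theorem proposition2p3:
  fixes mu :: "nat list" and k :: nat
  assumes "mu \<in> partitions k"
    and known_Ch: "\<And>nu. is_partition nu \<Longrightarrow> is_alpha_shifted_symmetric_fn (Ch nu)"
  shows "(\<forall>la. is_partition la \<longrightarrow>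
            Ko mu la = (\<Sum>nu\<in>partitions k. of_nat (Lcoef nu mu) / of_nat (zee nu) * Ch nu la))
         \<and> is_alpha_shifted_symmetric_fn (Ko mu)"
proof
  show Ko: "\<forall>la. is_partition la \<longrightarrow>
      Ko mu la = (\<Sum>nu\<in>partitions k. of_nat (Lcoef nu mu) / of_nat (zee nu) * Ch nu la)"
    using Ko_eq_sum_Ch[OF assms(1)] by simp
  have "is_alpha_shifted_symmetric_fn
      (\<lambda>la. \<Sum>nu\<in>partitions k. of_nat (Lcoef nu mu) / of_nat (zee nu) * Ch nu la)"
    using known_Ch by (intro is_alpha_shifted_symmetric_fn_sum finite_partitions) (simp add: partitions_def)
  then show "is_alpha_shifted_symmetric_fn (Ko mu)"
    by (rule is_alpha_shifted_symmetric_fn_cong) (simp add: Ko)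
qed

end
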